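(* Let $n, f, d$ be integers with $d \ge 1$, $f \ge 0$ and $2f+2 < n$, and set $m = n-f-2$. Let $V_1,\dots,V_{n-f}$ be independent, identically distributed random vectors in $\mathbb{R}^d$ with $V_i \sim G$, where $\mathbb{E}G = g$ and $\mathbb{E}\lVert G - g\rVert^2 = d\sigma^2$. Let $B_1,\dots,B_f$ be arbitrary random vectors in $\mathbb{R}^d$, possibly dependent on the $V_i$'s. Define $$\eta(n,f) = \sqrt{2\Big(n-f + \frac{f\cdot m + f^2\cdot (m+1)}{m}\Big)}.$$ If $\eta(n,f)\sqrt{d}\,\sigma < \lVert g\rVert$, then the multi-Krum aggregation rule (with parameter $f$) is $(\alpha,f)$-Byzantine resilient, where $0 \le \alpha < \pi/2$ is defined by $$\sin\alpha = \frac{\eta(n,f)\cdot\sqrt{d}\cdot\sigma}{\lVert g\rVert}.$$ That is, for any placement of the $f$ vectors $B_1,\dots,B_f$ among the $n$ inputs (at positions $1\le j_1<\dots<j_f\le n$, the remaining positions filled by $V_1,\dots,V_{n-f}$), the output $\mathrm{GAR}$ of multi-Krum satisfies (i) $\langle \mathbb{E}\,\mathrm{GAR}, g\rangle \ge (1-\sin\alpha)\lVert g\rVert^2 > 0$, and (ii) for each $r \in \{2,3,4\}$, $\mathbb{E}\lVert \mathrm{GAR}\rVert^r$ is bounded above by a linear combination of terms of the form $\mathbb{E}\lVert G\rVert^{r_1}\cdots\mathbb{E}\lVert G\rVert^{r_{n-1}}$ with nonnegative integers $r_1+\dots+r_{n-1} = r$.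
   Context: Multi-Krum aggregation rule: given $n$ input vectors $X_1,\dots,X_n \in \mathbb{R}^d$ and a parameter $f$, for each $i$ let $N(i)$ be the set of indices of the $n-f-2$ vectors $X_j$ ($j\neq i$) closest to $X_i$ in Euclidean norm, and define the score $s(i) = \sum_{j \in N(i)} \lVert X_i - X_j\rVert^2$. Multi-Krum outputs the average of the $m = n-f-2$ vectors $X_i$ having the $m$ smallest scores $s(i)$. All expectations are over the randomness of the $V_i$'s (and the $B_k$'s). *)

theory Defs
  imports "HOL-Probability.Probability"
begin

text \<open>Inputs are indexed by positions 1..n.  The Krum score of input i is the sum of the
  m = n-f-2 smallest squared distances from X i to the other inputs X j (j ~= i), which is
  the sum over the n-f-2 nearest neighbours N(i) (independent of how ties are resolved).\<close>
definition krum_score :: "nat \<Rightarrow> nat \<Rightarrow> (nat \<Rightarrow> 'a::real_normed_vector) \<Rightarrow> nat \<Rightarrow> real" where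
  "krum_score n f X i =
     sum_list (take (n - f - 2)
       (sort (map (\<lambda>j. (norm (X i - X j))\<^sup>2) (filter (\<lambda>j. j \<noteq> i) [1..<n+1]))))"

text \<open>Indices of the m = n-f-2 inputs with the smallest scores (ties broken by smaller index,
  as sort_key is stable).\<close>
definition multi_krum_sel :: "nat \<Rightarrow> nat \<Rightarrow> (nat \<Rightarrow> 'a::real_normed_vector) \<Rightarrow> nat set" where
  "multi_krum_sel n f X = set (take (n - f - 2) (sort_key (krum_score n f X) [1..<n+1]))"

definition multi_krum :: "nat \<Rightarrow> nat \<Rightarrow> (nat \<Rightarrow> 'a::real_normed_vector) \<Rightarrow> 'a" where
  "multi_krum n f X = (1 / real (n - f - 2)) *\<^sub>R (\<Sum>i\<in>multi_krum_sel n f X. X i)"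

text \<open>Placement of the Byzantine vectors B_1..B_f at the positions in J (in increasing order);
  the remaining positions of {1..n} are filled by V_1..V_{n-f} in increasing order.\<close>
definition byz_inputs ::
  "nat \<Rightarrow> nat set \<Rightarrow> (nat \<Rightarrow> 'w \<Rightarrow> 'a) \<Rightarrow> (nat \<Rightarrow> 'w \<Rightarrow> 'a) \<Rightarrow> 'w \<Rightarrow> nat \<Rightarrow> 'a" where
  "byz_inputs n J V B \<omega> k =
     (if k \<in> J then B (card {i\<in>J. i \<le> k}) \<omega> else V (card {i\<in>{1..n} - J. i \<le> k}) \<omega>)"

definition eta :: "nat \<Rightarrow> nat \<Rightarrow> real" where
  "eta n f = (let m = real (n - f - 2) in
     sqrt (2 * (real (n - f) + (real f * m + (real f)\<^sup>2 * (m + 1)) / m)))"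

text \<open>Exponent tuples (r_1,...,r_k) (stored at indices 0..k-1) of nonnegative integers with sum r.\<close>
definition moment_exps :: "nat \<Rightarrow> nat \<Rightarrow> (nat \<Rightarrow> nat) set" where
  "moment_exps k r = {rs. (\<forall>i\<ge>k. rs i = 0) \<and> (\<Sum>i<k. rs i) = r}"

end

theory Submission
  imports Defs
begin

text \<open>
  Let C be the n - f honest positions and S the sum of the squared distances |X k - g|^2 over k in C.
  An honest score is at most an average of m = n - f - 2 squared distances to honest neighbours,
  whence the honest scores sum to at most 4 m S. A selected Byzantine input scores no more than
  each of the b + 2 honest inputs left unselected (b \<le> f being the number of selected Byzantine
  inputs), and at least m - f + 1 of its m nearest neighbours are honest, so its squared distance
  to g is controlled by its score and S. Altogether |MultiKrum(X) - g|^2 \<le> Q S, deterministically,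
  with (n - f) Q \<le> eta(n,f)^2. Jensen's inequality then gives E|MultiKrum - g| \<le> eta(n,f) sqrt d sigma,
  and Cauchy-Schwarz turns this into the alignment bound. With g = 0 the same estimate gives
  |MultiKrum(X)| \<le> sqrt((n - f) Q) max over k in C of |X k|, so the r-th moment of the output is
  bounded by a multiple of E|G|^r alone.
\<close>

section \<open>Prefixes of sorted lists\<close>

lemma sort_map_eq_map_sort_key: "sort (map D xs) = map D (sort_key D xs)"
proof -
  have "map D (insort_key D x ys) = insort (D x) (map D ys)" for x ys
    by (induction ys) auto
  then show ?thesis by (induction xs) auto
qed

lemma sort_key_cong:
  assumes "\<And>y. y \<in> set xs \<Longrightarrow> f y = g y"
  shows "sort_key f xs = sort_key g xs"
proof -
  have "insort_key f x ys = insort_key g x ys" if "\<forall>y\<in>set (x # ys). f y = g y" for x ys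
    using that by (induction ys) auto
  with assms show ?thesis by (induction xs) auto
qed

lemma sorted_map_take_drop_le:
  assumes "sorted (map d P)" "a \<in> set (take k P)" "b \<in> set (drop k P)"
  shows "d a \<le> d b"
proof -
  have "sorted (map d (take k P) @ map d (drop k P))"
    using assms(1) by (metis append_take_drop_id map_append)
  then show ?thesis using assms(2,3) by (auto simp: sorted_append)
qed

lemma card_mult_sum_le_card_mult_sum:
  fixes d :: "'a \<Rightarrow> real"
  assumes "finite A" "finite B" "\<And>a b. a \<in> A \<Longrightarrow> b \<in> B \<Longrightarrow> d a \<le> d b"
  shows "real (card B) * sum d A \<le> real (card A) * sum d B"
proof -
  have "(\<Sum>a\<in>A. \<Sum>b\<in>B. d a) \<le> (\<Sum>a\<in>A. \<Sum>b\<in>B. d b)"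
    by (intro sum_mono) (use assms in auto)
  then show ?thesis by (simp add: sum_distrib_left sum_distrib_right mult.commute)
qed

lemma sum_sorted_prefix_le_sum:
  fixes d :: "'a \<Rightarrow> real"
  assumes dist: "distinct P" and srt: "sorted (map d P)" and T: "T \<subseteq> set P" "card T = k"
  shows "sum d (set (take k P)) \<le> sum d T"
proof -
  define A where "A = set (take k P)"
  have fA: "finite A" and fT: "finite T" using T finite_subset by (auto simp: A_def)
  have "k \<le> length P" using T card_mono[OF _ T(1)] by (metis List.finite_set dist distinct_card)
  then have cA: "card A = k" unfolding A_def using dist by (simp add: distinct_card min_def)
  have "T - A \<subseteq> set (drop k P)"
    using T unfolding A_def by (metis Diff_subset_conv append_take_drop_id set_append)
  then have le: "\<And>a b. a \<in> A - T \<Longrightarrow> b \<in> T - A \<Longrightarrow> d a \<le> d b"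
    using sorted_map_take_drop_le[OF srt] unfolding A_def by blast
  have cc: "card (A - T) = card (T - A)"
    using cA T(2) fA fT by (simp add: card_Diff_subset_Int Int_commute)
  have "sum d (A - T) \<le> sum d (T - A)"
  proof (cases "card (T - A) = 0")
    case True
    then have "T - A = {}" using fT by simp
    moreover have "A - T = {}" using True cc fA by simp
    ultimately show ?thesis by simp
  next
    case False
    have "real (card (T - A)) * sum d (A - T) \<le> real (card (A - T)) * sum d (T - A)"
      by (rule card_mult_sum_le_card_mult_sum) (use fA fT le in auto)
    then show ?thesis using cc False by simp
  qed
  moreover have "sum d A = sum d (A \<inter> T) + sum d (A - T)" "sum d T = sum d (A \<inter> T) + sum d (T - A)"
    using fA fT by (metis Diff_Int2 inf.idem sum.Int_Diff, metis Int_commute sum.Int_Diff)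
  ultimately show ?thesis unfolding A_def by linarith
qed

lemma sum_sorted_prefix_le_mean:
  fixes d :: "'a \<Rightarrow> real"
  assumes dist: "distinct P" and srt: "sorted (map d P)" and kle: "k \<le> length P"
  shows "real (length P) * sum d (set (take k P)) \<le> real k * sum d (set P)"
proof -
  define A where "A = set (take k P)"
  define B where "B = set (drop k P)"
  have cA: "card A = k" and cB: "card B = length P - k"
    unfolding A_def B_def using dist kle by (simp_all add: distinct_card min_def)
  have "real (card B) * sum d A \<le> real (card A) * sum d B"
    by (rule card_mult_sum_le_card_mult_sum)
      (use sorted_map_take_drop_le[OF srt] in \<open>auto simp: A_def B_def\<close>)
  moreover have "sum d (set P) = sum d A + sum d B"
    using dist unfolding A_def B_def
    by (metis append_take_drop_id distinct_append finite_set set_append sum.union_disjoint)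
  ultimately show ?thesis using cA cB kle unfolding A_def[symmetric]
    by (simp add: algebra_simps of_nat_diff)
qed

section \<open>Krum scores and the Multi-Krum selection\<close>

lemma krum_score_eq_sum_nearest:
  "krum_score n f X i = (\<Sum>j\<in>set (take (n-f-2) (sort_key (\<lambda>j. (norm (X i - X j))\<^sup>2)
       (filter (\<lambda>j. j \<noteq> i) [1..<n+1]))). (norm (X i - X j))\<^sup>2)"
  unfolding krum_score_def sort_map_eq_map_sort_key take_map
  by (subst sum_list_distinct_conv_sum_set) auto

lemma krum_score_nonneg: "0 \<le> krum_score n f X i"
  unfolding krum_score_eq_sum_nearest by (intro sum_nonneg) simp

lemma krum_score_le_sum:
  assumes "T \<subseteq> {1..n} - {i}" "n-f-2 \<le> card T"
  shows "krum_score n f X i \<le> (\<Sum>j\<in>T. (norm (X i - X j))\<^sup>2)"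
proof -
  obtain T' where T': "T' \<subseteq> T" "card T' = n-f-2"
    using obtain_subset_with_card_n[OF assms(2)] by metis
  have "krum_score n f X i \<le> (\<Sum>j\<in>T'. (norm (X i - X j))\<^sup>2)"
    unfolding krum_score_eq_sum_nearest
    by (rule sum_sorted_prefix_le_sum) (use T' assms in auto)
  also have "\<dots> \<le> (\<Sum>j\<in>T. (norm (X i - X j))\<^sup>2)"
    by (rule sum_mono2) (use T'(1) finite_subset[OF assms(1)] in auto)
  finally show ?thesis .
qed

lemma krum_score_mean_le:
  assumes U: "U \<subseteq> {1..n} - {i}" "n-f-2 \<le> card U"
  shows "real (card U) * krum_score n f X i \<le> real (n-f-2) * (\<Sum>j\<in>U. (norm (X i - X j))\<^sup>2)"
proof -
  define d where "d = (\<lambda>j. (norm (X i - X j))\<^sup>2)"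
  define P where "P = sort_key d (sorted_list_of_set U)"
  have fU: "finite U" using U(1) finite_subset by blast
  have P: "distinct P" "set P = U" "length P = card U" "sorted (map d P)"
    using fU by (auto simp: P_def)
  have "card (set (take (n-f-2) P)) = n-f-2"
    using P U(2) by (simp add: distinct_card min_def)
  moreover have "set (take (n-f-2) P) \<subseteq> {1..n} - {i}"
    by (metis P(2) U(1) order_trans set_take_subset)
  ultimately have "krum_score n f X i \<le> sum d (set (take (n-f-2) P))"
    unfolding d_def by (intro krum_score_le_sum) simp_all
  then have "real (card U) * krum_score n f X i \<le> real (length P) * sum d (set (take (n-f-2) P))"
    by (simp add: P(3) mult_left_mono)
  also have "\<dots> \<le> real (n-f-2) * sum d (set P)"
    by (rule sum_sorted_prefix_le_mean[OF P(1) P(4)]) (use U(2) in \<open>simp add: P(3)\<close>)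
  finally show ?thesis by (simp add: P(2) d_def)
qed

lemma krum_score_attained:
  "\<exists>T. T \<subseteq> {1..n} - {i} \<and> card T = n-f-2 \<and> krum_score n f X i = (\<Sum>j\<in>T. (norm (X i - X j))\<^sup>2)"
proof -
  define P where "P = sort_key (\<lambda>j. (norm (X i - X j))\<^sup>2) (filter (\<lambda>j. j \<noteq> i) [1..<n+1])"
  have P: "distinct P" "set P = {1..n} - {i}" by (auto simp: P_def)
  have "n - 1 \<le> card ({1..n} - {i})"
    by (cases "i \<in> {1..n}") (auto simp: card_Diff_singleton_if)
  then have "n-f-2 \<le> length P" using P distinct_card by fastforce
  then have "card (set (take (n-f-2) P)) = n-f-2" using P by (simp add: distinct_card min_def)
  moreover have "set (take (n-f-2) P) \<subseteq> {1..n} - {i}" using P by (metis set_take_subset)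
  ultimately show ?thesis unfolding krum_score_eq_sum_nearest P_def[symmetric] by blast
qed

lemma card_multi_krum_sel: "card (multi_krum_sel n f X) = n-f-2"
  unfolding multi_krum_sel_def by (simp add: distinct_card)

lemma finite_multi_krum_sel: "finite (multi_krum_sel n f X)"
  unfolding multi_krum_sel_def by simp

lemma multi_krum_sel_subset: "multi_krum_sel n f X \<subseteq> {1..n}"
  unfolding multi_krum_sel_def by (metis atLeastLessThanSuc_atLeastAtMost set_sort set_take_subset set_upt Suc_eq_plus1)

lemma krum_score_selected_le:
  assumes "i \<in> multi_krum_sel n f X" "j \<in> {1..n} - multi_krum_sel n f X"
  shows "krum_score n f X i \<le> krum_score n f X j"
proof -
  define P where "P = sort_key (krum_score n f X) [1..<n+1]"
  have "set P = {1..n}" by (auto simp: P_def)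
  moreover have "set P = set (take (n-f-2) P) \<union> set (drop (n-f-2) P)"
    by (metis append_take_drop_id set_append)
  ultimately have "j \<in> set (drop (n-f-2) P)"
    using assms(2) unfolding multi_krum_sel_def P_def[symmetric] by blast
  then show ?thesis
    using sorted_map_take_drop_le[of "krum_score n f X" P] assms(1)
    by (auto simp: P_def multi_krum_sel_def)
qed

lemma multi_krum_cong:
  assumes "\<And>k. k \<in> {1..n} \<Longrightarrow> X k = Y k"
  shows "multi_krum n f X = multi_krum n f Y"
proof -
  have "krum_score n f X i = krum_score n f Y i" if "i \<in> {1..n}" for i
  proof -
    have "map (\<lambda>j. (norm (X i - X j))\<^sup>2) (filter (\<lambda>j. j \<noteq> i) [1..<n+1])
        = map (\<lambda>j. (norm (Y i - Y j))\<^sup>2) (filter (\<lambda>j. j \<noteq> i) [1..<n+1])"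
      using assms that by (intro map_cong) (auto simp del: upt_Suc)
    then show ?thesis unfolding krum_score_def by (simp only:)
  qed
  then have "multi_krum_sel n f X = multi_krum_sel n f Y"
    unfolding multi_krum_sel_def by (metis atLeastLessThanSuc_atLeastAtMost set_upt Suc_eq_plus1 sort_key_cong)
  then show ?thesis
    unfolding multi_krum_def using multi_krum_sel_subset[of n f Y] assms
    by (metis (no_types, lifting) subsetD sum.cong)
qed

lemma multi_krum_diff:
  assumes "0 < n-f-2"
  shows "multi_krum n f X - g = (1 / real (n-f-2)) *\<^sub>R (\<Sum>i\<in>multi_krum_sel n f X. X i - g)"
proof -
  have "(\<Sum>i\<in>multi_krum_sel n f X. X i - g) = (\<Sum>i\<in>multi_krum_sel n f X. X i) - real (n-f-2) *\<^sub>R g"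
    by (simp add: sum_subtractf sum_constant_scaleR card_multi_krum_sel)
  then show ?thesis using assms unfolding multi_krum_def by (simp add: scaleR_diff_right)
qed

section \<open>The deterministic bound\<close>

lemma norm_add_sq_le:
  fixes x y :: "'a::real_normed_vector"
  shows "(norm (x + y))\<^sup>2 \<le> 2 * (norm x)\<^sup>2 + 2 * (norm y)\<^sup>2"
proof -
  have "(norm (x + y))\<^sup>2 \<le> (norm x + norm y)\<^sup>2"
    by (simp add: norm_triangle_ineq power_mono)
  also have "\<dots> = 2 * (norm x)\<^sup>2 + 2 * (norm y)\<^sup>2 - (norm x - norm y)\<^sup>2"
    by (simp add: power2_eq_square algebra_simps)
  also have "\<dots> \<le> 2 * (norm x)\<^sup>2 + 2 * (norm y)\<^sup>2"
    by simp
  finally show ?thesis .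
qed

lemma norm_multi_krum_diff_sq_le:
  assumes "0 < n-f-2"
  shows "(norm (multi_krum n f X - g))\<^sup>2
           \<le> (1 / real (n-f-2)) * (\<Sum>i\<in>multi_krum_sel n f X. (norm (X i - g))\<^sup>2)"
proof -
  define S where "S = multi_krum_sel n f X"
  have "norm (multi_krum n f X - g) \<le> (1 / real (n-f-2)) * (\<Sum>i\<in>S. norm (X i - g))"
    unfolding multi_krum_diff[OF assms] S_def by (simp add: norm_sum divide_right_mono)
  then have "(norm (multi_krum n f X - g))\<^sup>2 \<le> ((1 / real (n-f-2)) * (\<Sum>i\<in>S. norm (X i - g)))\<^sup>2"
    by (simp add: power_mono)
  also have "\<dots> = (1 / real (n-f-2))\<^sup>2 * (\<Sum>i\<in>S. norm (X i - g))\<^sup>2"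
    by (rule power_mult_distrib)
  also have "\<dots> \<le> (1 / real (n-f-2))\<^sup>2 * ((\<Sum>i\<in>S. (norm (X i - g))\<^sup>2) * card S)"
    by (intro mult_left_mono sum_squared_le_sum_of_squares) simp
  also have "\<dots> = (1 / real (n-f-2)) * (\<Sum>i\<in>S. (norm (X i - g))\<^sup>2)"
    using assms by (simp add: S_def card_multi_krum_sel power2_eq_square)
  finally show ?thesis unfolding S_def .
qed

lemma sum_krum_score_honest_le:
  assumes nf: "2*f+2 < n" and C: "C \<subseteq> {1..n}" "card C = n - f"
  shows "(\<Sum>j\<in>C. krum_score n f X j) \<le> 4 * real (n-f-2) * (\<Sum>k\<in>C. (norm (X k - g))\<^sup>2)"
proof -
  define a where "a = (\<lambda>k. (norm (X k - g))\<^sup>2)"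
  define S where "S = (\<Sum>k\<in>C. a k)"
  have fC: "finite C" using C(1) finite_subset by blast
  have each: "real (n-f-1) * krum_score n f X j \<le> real (n-f-2) * (2 * real (n-f-1) * a j + 2 * (S - a j))"
    if j: "j \<in> C" for j
  proof -
    have cU: "card (C - {j}) = n-f-1" using j fC C(2) by simp
    have "real (card (C - {j})) * krum_score n f X j \<le> real (n-f-2) * (\<Sum>l\<in>C-{j}. (norm (X j - X l))\<^sup>2)"
      by (rule krum_score_mean_le) (use C(1) cU in auto)
    also have "\<dots> \<le> real (n-f-2) * (\<Sum>l\<in>C-{j}. 2 * a j + 2 * a l)"
    proof (intro mult_left_mono sum_mono)
      fix l
      show "(norm (X j - X l))\<^sup>2 \<le> 2 * a j + 2 * a l"
        using norm_add_sq_le[of "X j - g" "g - X l"] unfolding a_def by (simp add: norm_minus_commute)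
    qed simp
    also have "(\<Sum>l\<in>C-{j}. 2 * a j + 2 * a l) = 2 * real (n-f-1) * a j + 2 * (S - a j)"
      using j fC cU by (simp add: S_def sum.distrib sum_distrib_left[symmetric] sum_diff1)
    finally show ?thesis using cU by simp
  qed
  have "real (n-f-1) * (\<Sum>j\<in>C. krum_score n f X j)
      \<le> (\<Sum>j\<in>C. real (n-f-2) * (2 * real (n-f-1) * a j + 2 * (S - a j)))"
    unfolding sum_distrib_left by (intro sum_mono each)
  also have "\<dots> = real (n-f-2) * (2 * real (n-f-1) * S + 2 * (real (n-f) * S - S))"
    by (simp add: sum_distrib_left[symmetric] sum.distrib sum_subtractf S_def[symmetric] C(2))
  also have "\<dots> = real (n-f-1) * (4 * real (n-f-2) * S)"
    using nf by (simp add: of_nat_diff algebra_simps)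
  finally show ?thesis using nf unfolding S_def a_def by simp
qed

text \<open>Among the m nearest neighbours of a Byzantine input at least m-f+1 are honest.\<close>

lemma byzantine_sq_dist_le:
  assumes nf: "2*f+2 < n" and C: "C \<subseteq> {1..n}" "card C = n - f" and i: "i \<in> {1..n} - C"
  shows "(real (n-f-2) - real f + 1) * (norm (X i - g))\<^sup>2
           \<le> 2 * krum_score n f X i + 2 * (\<Sum>k\<in>C. (norm (X k - g))\<^sup>2)"
proof -
  define a where "a = (\<lambda>k. (norm (X k - g))\<^sup>2)"
  obtain T where T: "T \<subseteq> {1..n} - {i}" "card T = n-f-2"
      and sc: "krum_score n f X i = (\<Sum>j\<in>T. (norm (X i - X j))\<^sup>2)"
    using krum_score_attained[of n i f X] by auto
  have fC: "finite C" and fT: "finite T"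
    using finite_subset[OF C(1)] finite_subset[OF T(1)] by auto
  define K where "K = T \<inter> C"
  have cB: "card ({1..n} - C) = f" using C fC nf by (simp add: card_Diff_subset)
  have "T - C \<subseteq> ({1..n} - C) - {i}" using T(1) by auto
  then have "card (T - C) \<le> card (({1..n} - C) - {i})" by (intro card_mono) auto
  also have "\<dots> = f - 1" using i cB by simp
  finally have "card (T - C) \<le> f - 1" .
  moreover have "card T = card K + card (T - C)"
    unfolding K_def by (rule card_Int_Diff[OF fT])
  moreover have "0 < card ({1..n} - C)" using i by (auto simp: card_gt_0_iff)
  then have "1 \<le> f" using cB by simp
  ultimately have cK: "real (n-f-2) - real f + 1 \<le> real (card K)" using T(2) nf by linarith
  have "real (card K) * a i = (\<Sum>k\<in>K. a i)" by simp
  also have "\<dots> \<le> (\<Sum>k\<in>K. 2 * (norm (X i - X k))\<^sup>2 + 2 * a k)"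
  proof (rule sum_mono)
    fix k
    show "a i \<le> 2 * (norm (X i - X k))\<^sup>2 + 2 * a k"
      using norm_add_sq_le[of "X i - X k" "X k - g"] unfolding a_def by simp
  qed
  also have "\<dots> = 2 * (\<Sum>k\<in>K. (norm (X i - X k))\<^sup>2) + 2 * (\<Sum>k\<in>K. a k)"
    by (simp add: sum.distrib sum_distrib_left)
  also have "\<dots> \<le> 2 * krum_score n f X i + 2 * (\<Sum>k\<in>C. a k)"
    unfolding sc K_def using fT fC by (intro add_mono mult_left_mono sum_mono2) (auto simp: a_def)
  finally have "real (card K) * a i \<le> 2 * krum_score n f X i + 2 * (\<Sum>k\<in>C. a k)" .
  moreover have "(real (n-f-2) - real f + 1) * a i \<le> real (card K) * a i"
    using cK by (rule mult_right_mono) (simp add: a_def)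
  ultimately show ?thesis unfolding a_def by linarith
qed

text \<open>A selected Byzantine input scores no more than any of the b+2 unselected honest inputs,
  where b \<le> f is the number of selected Byzantine inputs.\<close>

lemma sum_krum_score_selected_byzantine_le:
  assumes nf: "2*f+2 < n" and C: "C \<subseteq> {1..n}" "card C = n - f"
  shows "(\<Sum>i\<in>multi_krum_sel n f X - C. krum_score n f X i)
           \<le> 4 * real f * real (n-f-2) * (\<Sum>k\<in>C. (norm (X k - g))\<^sup>2) / (real f + 2)"
proof -
  define Sel where "Sel = multi_krum_sel n f X"
  define S where "S = (\<Sum>k\<in>C. (norm (X k - g))\<^sup>2)"
  define b where "b = card (Sel - C)"
  have fC: "finite C" and fSel: "finite Sel"
    using finite_subset[OF C(1)] finite_multi_krum_sel by (auto simp: Sel_def)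
  have S0: "0 \<le> S" unfolding S_def by (simp add: sum_nonneg)
  have "b \<le> card ({1..n} - C)" unfolding b_def Sel_def
    using multi_krum_sel_subset by (intro card_mono) auto
  then have bf: "b \<le> f" using C fC by (simp add: card_Diff_subset)
  have "card (Sel \<inter> C) + b = n-f-2"
    using card_Int_Diff[OF fSel, of C] card_multi_krum_sel[of n f X] unfolding b_def Sel_def by simp
  moreover have "card (C - Sel) = card C - card (Sel \<inter> C)"
    using card_Diff_subset_Int[of C Sel] fC by (simp add: Int_commute)
  ultimately have cU: "card (C - Sel) = b + 2" using C(2) nf by linarith
  have "real (card (C - Sel)) * (\<Sum>i\<in>Sel - C. krum_score n f X i)
      \<le> real b * (\<Sum>j\<in>C - Sel. krum_score n f X j)"
    unfolding b_def using fC fSel C(1) krum_score_selected_le[of _ n f X]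
    by (intro card_mult_sum_le_card_mult_sum) (auto simp: Sel_def)
  also have "\<dots> \<le> real b * (\<Sum>j\<in>C. krum_score n f X j)"
    using fC by (intro mult_left_mono sum_mono2) (auto simp: krum_score_nonneg)
  also have "\<dots> \<le> real b * (4 * real (n-f-2) * S)"
    unfolding S_def by (intro mult_left_mono sum_krum_score_honest_le nf C) simp
  finally have "(real b + 2) * (\<Sum>i\<in>Sel - C. krum_score n f X i) \<le> real b * (4 * real (n-f-2) * S)"
    using cU by (simp add: add.commute)
  then have "(\<Sum>i\<in>Sel - C. krum_score n f X i) \<le> real b * (4 * real (n-f-2) * S) / (real b + 2)"
    by (simp add: pos_le_divide_eq mult.commute)
  also have "\<dots> = real b / (real b + 2) * (4 * real (n-f-2) * S)"
    by simp
  also have "\<dots> \<le> real f / (real f + 2) * (4 * real (n-f-2) * S)"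
    using bf S0 by (intro mult_right_mono) (simp_all add: field_simps)
  finally show ?thesis unfolding Sel_def S_def by (simp add: ac_simps)
qed

definition krum_factor :: "nat \<Rightarrow> nat \<Rightarrow> real" where
  "krum_factor n f = (1 + (8 * real f * real (n-f-2) / (real f + 2) + 2 * real f)
                           / (real (n-f-2) - real f + 1)) / real (n-f-2)"

lemma krum_factor_nonneg: "2*f+2 < n \<Longrightarrow> 0 \<le> krum_factor n f"
  unfolding krum_factor_def by (intro divide_nonneg_nonneg add_nonneg_nonneg) auto

lemma sum_sq_dist_multi_krum_sel_le:
  assumes nf: "2*f+2 < n" and C: "C \<subseteq> {1..n}" "card C = n - f"
  shows "(\<Sum>i\<in>multi_krum_sel n f X. (norm (X i - g))\<^sup>2)
           \<le> real (n-f-2) * krum_factor n f * (\<Sum>k\<in>C. (norm (X k - g))\<^sup>2)"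
proof -
  define m where "m = real (n-f-2)"
  define kap where "kap = m - real f + 1"
  define c where "c = 8 * real f * m / (real f + 2) + 2 * real f"
  define a where "a = (\<lambda>k. (norm (X k - g))\<^sup>2)"
  define S where "S = (\<Sum>k\<in>C. a k)"
  define Sel where "Sel = multi_krum_sel n f X"
  have fC: "finite C" and fSel: "finite Sel"
    using finite_subset[OF C(1)] finite_multi_krum_sel by (auto simp: Sel_def)
  have kap: "0 < kap" and m0: "0 < m" unfolding kap_def m_def using nf by auto
  have "kap * (\<Sum>i\<in>Sel - C. a i) = (\<Sum>i\<in>Sel - C. kap * a i)"
    by (simp add: sum_distrib_left)
  also have "\<dots> \<le> (\<Sum>i\<in>Sel - C. 2 * krum_score n f X i + 2 * S)"
  proof (rule sum_mono)
    fix i assume "i \<in> Sel - C"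
    then have "i \<in> {1..n} - C" using multi_krum_sel_subset unfolding Sel_def by blast
    then show "kap * a i \<le> 2 * krum_score n f X i + 2 * S"
      unfolding kap_def m_def a_def S_def by (rule byzantine_sq_dist_le[OF nf C])
  qed
  also have "\<dots> = 2 * (\<Sum>i\<in>Sel - C. krum_score n f X i) + 2 * (real (card (Sel - C)) * S)"
    by (simp add: sum.distrib sum_distrib_left)
  also have "\<dots> \<le> 2 * (4 * real f * m * S / (real f + 2)) + 2 * (real f * S)"
  proof -
    have "card (Sel - C) \<le> card ({1..n} - C)"
      unfolding Sel_def using multi_krum_sel_subset by (intro card_mono) auto
    then have "real (card (Sel - C)) * S \<le> real f * S"
      using C fC nf by (intro mult_right_mono) (simp_all add: card_Diff_subset S_def a_def sum_nonneg)
    then show ?thesis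
      using sum_krum_score_selected_byzantine_le[OF nf C, of X g]
      unfolding m_def S_def a_def Sel_def by linarith
  qed
  also have "\<dots> = c * S" unfolding c_def by (simp add: algebra_simps)
  finally have "(\<Sum>i\<in>Sel - C. a i) \<le> c / kap * S"
    using kap by (simp add: pos_le_divide_eq mult.commute)
  moreover have "(\<Sum>i\<in>Sel. a i) = (\<Sum>i\<in>Sel \<inter> C. a i) + (\<Sum>i\<in>Sel - C. a i)"
    by (rule sum.Int_Diff[OF fSel])
  moreover have "(\<Sum>i\<in>Sel \<inter> C. a i) \<le> S"
    unfolding S_def a_def using fC by (intro sum_mono2) auto
  ultimately have "(\<Sum>i\<in>Sel. a i) \<le> (1 + c / kap) * S"
    by (simp add: distrib_right)
  then show ?thesis
    using m0 unfolding krum_factor_def Sel_def a_def S_def kap_def c_def m_def by simp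
qed

lemma norm_multi_krum_diff_sq_le_honest:
  assumes nf: "2*f+2 < n" and C: "C \<subseteq> {1..n}" "card C = n - f"
  shows "(norm (multi_krum n f X - g))\<^sup>2 \<le> krum_factor n f * (\<Sum>k\<in>C. (norm (X k - g))\<^sup>2)"
proof -
  have m: "0 < real (n-f-2)" using nf by simp
  have "(norm (multi_krum n f X - g))\<^sup>2
          \<le> (1 / real (n-f-2)) * (\<Sum>i\<in>multi_krum_sel n f X. (norm (X i - g))\<^sup>2)"
    by (rule norm_multi_krum_diff_sq_le) (use nf in simp)
  also have "\<dots> \<le> (1 / real (n-f-2)) * (real (n-f-2) * krum_factor n f * (\<Sum>k\<in>C. (norm (X k - g))\<^sup>2))"
    by (intro mult_left_mono sum_sq_dist_multi_krum_sel_le[OF nf C]) simp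
  finally show ?thesis using m by simp
qed

lemma krum_factor_poly_ineq:
  fixes f t :: real
  assumes "0 \<le> f" "0 \<le> t"
  defines "m \<equiv> f + 1 + t"
  shows "(m + 2) * ((t + 2) * (f + 2) + 8*f*m + 2*f*(f+2))
           \<le> 2 * ((m + 2)*m + f*m + f^2*(m+1)) * ((t + 2) * (f + 2))"
proof -
  have "2 * ((m + 2)*m + f*m + f^2*(m+1)) * ((t + 2) * (f + 2))
          - (m + 2) * ((t + 2) * (f + 2) + 8*f*m + 2*f*(f+2))
        = 12 + 34*t + 22*t*t + 4*t*t*t + 6*f + 23*f*t + 15*f*t*t + 2*f*t*t*t + 8*f*f
          + 27*f*f*t + 10*f*f*t*t + 14*f*f*f + 16*f*f*f*t + 2*f*f*f*t*t + 4*f*f*f*f + 2*f*f*f*f*t"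
    unfolding m_def by (simp add: algebra_simps power2_eq_square)
  moreover have "0 \<le> 12 + 34*t + 22*t*t + 4*t*t*t + 6*f + 23*f*t + 15*f*t*t + 2*f*t*t*t + 8*f*f
          + 27*f*f*t + 10*f*f*t*t + 14*f*f*f + 16*f*f*f*t + 2*f*f*f*t*t + 4*f*f*f*f + 2*f*f*f*f*t"
    using assms by (intro add_nonneg_nonneg mult_nonneg_nonneg) simp_all
  ultimately show ?thesis by linarith
qed

lemma eta_sq:
  "(eta n f)\<^sup>2 = 2 * (real (n-f) + (real f * real (n-f-2) + (real f)\<^sup>2 * (real (n-f-2) + 1)) / real (n-f-2))"
  unfolding eta_def Let_def by (subst real_sqrt_pow2) (simp_all add: divide_nonneg_nonneg)

lemma krum_factor_le_eta_sq:
  assumes nf: "2*f+2 < n"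
  shows "real (n-f) * krum_factor n f \<le> (eta n f)\<^sup>2"
proof -
  define m where "m = real (n-f-2)"
  define t where "t = m - real f - 1"
  define F where "F = real f"
  define K where "K = (t + 2) * (F + 2)"
  have t0: "0 \<le> t" and mt: "m = F + 1 + t" and Nm: "real (n-f) = m + 2"
    unfolding t_def m_def F_def using nf by (simp_all add: of_nat_diff)
  have F0: "0 \<le> F" and K0: "0 < K" and m0: "0 < m" using t0 mt by (auto simp: F_def K_def)
  have "1 + (8*F*m/(F+2) + 2*F)/(m - F + 1) = (K + 8*F*m + 2*F*(F+2)) / K"
  proof -
    have "F + 2 \<noteq> 0" "t + 2 \<noteq> 0" "m - F + 1 = t + 2" using t0 F0 mt by linarith+
    then have "(8*F*m/(F+2) + 2*F)/(m - F + 1) = (8*F*m + 2*F*(F+2)) / K"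
      unfolding K_def by (simp add: field_simps)
    moreover have "(K + 8*F*m + 2*F*(F+2)) / K = 1 + (8*F*m + 2*F*(F+2)) / K"
      using K0 by (simp add: add_divide_distrib)
    ultimately show ?thesis by simp
  qed
  then have "real (n-f) * krum_factor n f = ((m + 2) * (K + 8*F*m + 2*F*(F+2)) / K) / m"
    unfolding krum_factor_def Nm m_def[symmetric] F_def[symmetric] by simp
  also have "\<dots> \<le> (2 * ((m + 2)*m + F*m + F^2*(m+1))) / m"
    using krum_factor_poly_ineq[OF F0 t0] K0 m0 unfolding K_def mt[symmetric]
    by (intro divide_right_mono) (simp_all add: pos_divide_le_eq)
  also have "\<dots> = (eta n f)\<^sup>2"
    unfolding eta_sq Nm m_def[symmetric] F_def[symmetric] using m0 by (simp add: field_simps)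
  finally show ?thesis .
qed

section \<open>Measurability\<close>

lemma measurable_insort_key:
  fixes d :: "'i \<Rightarrow> 'w \<Rightarrow> real"
  assumes "\<And>j. d j \<in> borel_measurable M"
  shows "(\<lambda>\<omega>. insort_key (\<lambda>j. d j \<omega>) x l) \<in> M \<rightarrow>\<^sub>M count_space UNIV"
proof (induction l)
  case (Cons y ys)
  have "(\<lambda>\<omega>. y # insort_key (\<lambda>j. d j \<omega>) x ys) \<in> M \<rightarrow>\<^sub>M count_space UNIV"
    using measurable_compose[OF Cons, of "\<lambda>l. y # l"] by simp
  moreover have "{\<omega> \<in> space M. d x \<omega> \<le> d y \<omega>} \<in> sets M"
    by (rule borel_measurable_le[OF assms assms])
  ultimately show ?case by (simp add: measurable_If)
qed simp

lemma measurable_sort_key: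
  fixes d :: "'i::countable \<Rightarrow> 'w \<Rightarrow> real"
  assumes "\<And>j. d j \<in> borel_measurable M"
  shows "(\<lambda>\<omega>. sort_key (\<lambda>j. d j \<omega>) xs) \<in> M \<rightarrow>\<^sub>M count_space UNIV"
proof (induction xs)
  case (Cons x xs)
  show ?case
    using measurable_compose_countable[OF measurable_insort_key[OF assms] Cons] by simp
qed simp

lemma measurable_krum_score:
  fixes X :: "nat \<Rightarrow> 'w \<Rightarrow> 'a::euclidean_space"
  assumes X: "\<And>k. X k \<in> borel_measurable M"
  shows "(\<lambda>\<omega>. krum_score n f (\<lambda>k. X k \<omega>) i) \<in> borel_measurable M"
proof -
  have "(\<lambda>\<omega>. sort_key (\<lambda>j. (norm (X i \<omega> - X j \<omega>))\<^sup>2) (filter (\<lambda>j. j \<noteq> i) [1..<n+1]))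
          \<in> M \<rightarrow>\<^sub>M count_space UNIV"
    by (rule measurable_sort_key) (use X in measurable)
  then have "(\<lambda>\<omega>. (\<lambda>l \<omega>. \<Sum>j\<in>set (take (n-f-2) l). (norm (X i \<omega> - X j \<omega>))\<^sup>2)
      (sort_key (\<lambda>j. (norm (X i \<omega> - X j \<omega>))\<^sup>2) (filter (\<lambda>j. j \<noteq> i) [1..<n+1])) \<omega>) \<in> borel_measurable M"
    by (rule measurable_compose_countable[rotated]) (use X in measurable)
  then show ?thesis unfolding krum_score_eq_sum_nearest by simp
qed

lemma measurable_multi_krum:
  fixes X :: "nat \<Rightarrow> 'w \<Rightarrow> 'a::euclidean_space"
  assumes X: "\<And>k. X k \<in> borel_measurable M"
  shows "(\<lambda>\<omega>. multi_krum n f (\<lambda>k. X k \<omega>)) \<in> borel_measurable M"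
proof -
  have "(\<lambda>\<omega>. sort_key (\<lambda>i. krum_score n f (\<lambda>k. X k \<omega>) i) [1..<n+1]) \<in> M \<rightarrow>\<^sub>M count_space UNIV"
    by (rule measurable_sort_key) (rule measurable_krum_score[OF X])
  then have "(\<lambda>\<omega>. (\<lambda>l \<omega>. (1 / real (n - f - 2)) *\<^sub>R (\<Sum>i\<in>set (take (n-f-2) l). X i \<omega>))
      (sort_key (\<lambda>i. krum_score n f (\<lambda>k. X k \<omega>) i) [1..<n+1]) \<omega>) \<in> borel_measurable M"
    by (rule measurable_compose_countable[rotated]) (use X in measurable)
  then show ?thesis unfolding multi_krum_def multi_krum_sel_def by simp
qed

section \<open>Placing the Byzantine inputs\<close>

lemma byz_inputs_index:
  assumes J: "J \<subseteq> {1..n}" "card J = f" and k: "k \<in> {1..n}"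
  shows "k \<in> J \<Longrightarrow> card {i\<in>J. i \<le> k} \<in> {1..f}"
    and "k \<notin> J \<Longrightarrow> card {i\<in>{1..n} - J. i \<le> k} \<in> {1..n-f}"
proof -
  have fJ: "finite J" using J(1) finite_subset by blast
  show "card {i\<in>J. i \<le> k} \<in> {1..f}" if "k \<in> J"
    using that fJ J(2) card_mono[OF fJ, of "{i\<in>J. i \<le> k}"] by (auto simp: card_gt_0_iff Suc_le_eq)
  have "card {i\<in>{1..n} - J. i \<le> k} \<le> card ({1..n} - J)" by (intro card_mono) auto
  then show "card {i\<in>{1..n} - J. i \<le> k} \<in> {1..n-f}" if "k \<notin> J"
    using that k J fJ by (auto simp: card_Diff_subset card_gt_0_iff Suc_le_eq)
qed

lemma byz_inputs_honest:
  assumes "J \<subseteq> {1..n}" "card J = f" "k \<in> {1..n} - J"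
  shows "\<exists>j\<in>{1..n-f}. \<forall>\<omega>. byz_inputs n J V B \<omega> k = V j \<omega>"
  using byz_inputs_index(2)[OF assms(1,2), of k] assms(3) unfolding byz_inputs_def by auto

lemma measurable_byz_inputs:
  assumes J: "J \<subseteq> {1..n}" "card J = f"
    and V: "\<forall>i\<in>{1..n-f}. V i \<in> borel_measurable M" and B: "\<forall>i\<in>{1..f}. B i \<in> borel_measurable M"
    and k: "k \<in> {1..n}"
  shows "(\<lambda>\<omega>. byz_inputs n J V B \<omega> k) \<in> borel_measurable M"
  using byz_inputs_index[OF J k] V B unfolding byz_inputs_def by (cases "k \<in> J") auto

text \<open>Positions outside 1..n are never read by Multi-Krum, but the placement may put
  non-measurable junk there; we replace it by 0.\<close>

lemma measurable_multi_krum_byz_inputs: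
  fixes V B :: "nat \<Rightarrow> 'w \<Rightarrow> 'a::euclidean_space"
  assumes J: "J \<subseteq> {1..n}" "card J = f"
    and V: "\<forall>i\<in>{1..n-f}. V i \<in> borel_measurable M" and B: "\<forall>i\<in>{1..f}. B i \<in> borel_measurable M"
  shows "(\<lambda>\<omega>. multi_krum n f (byz_inputs n J V B \<omega>)) \<in> borel_measurable M"
proof -
  define X where "X = (\<lambda>k \<omega>. if k \<in> {1..n} then byz_inputs n J V B \<omega> k else 0)"
  have "multi_krum n f (byz_inputs n J V B \<omega>) = multi_krum n f (\<lambda>k. X k \<omega>)" for \<omega>
    unfolding X_def by (rule multi_krum_cong) simp
  moreover have "X k \<in> borel_measurable M" for k
    using measurable_byz_inputs[OF J V B] unfolding X_def by (cases "k \<in> {1..n}") auto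
  ultimately show ?thesis using measurable_multi_krum[of X M n f] by simp
qed

section \<open>Alignment of the expected output with the gradient\<close>

lemma (in prob_space) expectation_le_sqrt_if_sq_le:
  fixes Z :: "'a \<Rightarrow> real"
  assumes Z: "Z \<in> borel_measurable M" and W: "integrable M W" and le: "\<And>\<omega>. (Z \<omega>)\<^sup>2 \<le> W \<omega>"
  shows "integrable M Z" and "expectation Z \<le> sqrt (expectation W)"
proof -
  have Z2: "integrable M (\<lambda>\<omega>. (Z \<omega>)\<^sup>2)"
  proof (rule Bochner_Integration.integrable_bound[OF W])
    show "(\<lambda>\<omega>. (Z \<omega>)\<^sup>2) \<in> borel_measurable M" using Z by measurable
    show "AE \<omega> in M. norm ((Z \<omega>)\<^sup>2) \<le> norm (W \<omega>)"
    proof (rule AE_I2)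
      fix \<omega>
      show "norm ((Z \<omega>)\<^sup>2) \<le> norm (W \<omega>)"
        unfolding real_norm_def abs_power2 using le[of \<omega>] abs_ge_self[of "W \<omega>"] by linarith
    qed
  qed
  show Zi: "integrable M Z" by (rule square_integrable_imp_integrable[OF Z Z2])
  have "(expectation Z)\<^sup>2 \<le> expectation (\<lambda>\<omega>. (Z \<omega>)\<^sup>2)"
    using variance_eq[OF Zi Z2] variance_positive[of Z] by linarith
  also have "\<dots> \<le> expectation W" by (rule integral_mono[OF Z2 W le])
  finally show "expectation Z \<le> sqrt (expectation W)" by (rule real_le_rsqrt)
qed

lemma (in prob_space) inner_integral_ge:
  fixes Y :: "'a \<Rightarrow> 'b::euclidean_space"
  assumes Y: "Y \<in> borel_measurable M" and D: "integrable M (\<lambda>\<omega>. norm (Y \<omega> - g))"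
  shows "(norm g)\<^sup>2 - norm g * expectation (\<lambda>\<omega>. norm (Y \<omega> - g)) \<le> integral\<^sup>L M Y \<bullet> g"
proof -
  have Yi: "integrable M Y"
  proof (rule Bochner_Integration.integrable_bound)
    show "integrable M (\<lambda>\<omega>. norm g + norm (Y \<omega> - g))" using D by simp
    show "AE \<omega> in M. norm (Y \<omega>) \<le> norm (norm g + norm (Y \<omega> - g))"
    proof (rule AE_I2)
      fix \<omega>
      have "norm (Y \<omega>) \<le> norm g + norm (Y \<omega> - g)"
        by (metis add.commute diff_add_cancel norm_triangle_ineq)
      then show "norm (Y \<omega>) \<le> norm (norm g + norm (Y \<omega> - g))" by simp
    qed
  qed (rule Y)
  have pw: "(norm g)\<^sup>2 - norm g * norm (Y \<omega> - g) \<le> Y \<omega> \<bullet> g" for \<omega>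
  proof -
    have "Y \<omega> \<bullet> g = g \<bullet> g + (Y \<omega> - g) \<bullet> g" by (simp add: inner_diff_left)
    moreover have "- ((Y \<omega> - g) \<bullet> g) \<le> norm (Y \<omega> - g) * norm g"
      using norm_cauchy_schwarz[of "g - Y \<omega>" g] by (simp add: inner_diff_left norm_minus_commute)
    moreover have "g \<bullet> g = (norm g)\<^sup>2" by (simp add: power2_norm_eq_inner)
    ultimately show ?thesis by (simp add: mult.commute)
  qed
  have "(norm g)\<^sup>2 - norm g * expectation (\<lambda>\<omega>. norm (Y \<omega> - g))
      = expectation (\<lambda>\<omega>. (norm g)\<^sup>2 - norm g * norm (Y \<omega> - g))"
    using D by (simp add: prob_space)
  also have "\<dots> \<le> expectation (\<lambda>\<omega>. Y \<omega> \<bullet> g)"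
    by (rule integral_mono) (use Yi D pw in simp_all)
  also have "\<dots> = integral\<^sup>L M Y \<bullet> g" using Yi by simp
  finally show ?thesis .
qed

lemma multi_krum_inner_mean_ge:
  fixes M :: "'w measure" and G :: "'a::euclidean_space measure"
  assumes nf: "2*f+2 < n" and "prob_space M"
    and V: "\<forall>i\<in>{1..n-f}. V i \<in> borel_measurable M \<and> distr M borel (V i) = G"
    and B: "\<forall>i\<in>{1..f}. B i \<in> borel_measurable M"
    and iG2: "integrable G (\<lambda>x. (norm (x - g))\<^sup>2)"
    and vG: "(\<integral>x. (norm (x - g))\<^sup>2 \<partial>G) = real DIM('a) * \<sigma>\<^sup>2" and "0 \<le> \<sigma>"
    and lt: "eta n f * sqrt (real DIM('a)) * \<sigma> < norm g"
    and sa: "sin \<alpha> = eta n f * sqrt (real DIM('a)) * \<sigma> / norm g"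
    and J: "J \<subseteq> {1..n}" "card J = f"
  shows "(\<integral>\<omega>. multi_krum n f (byz_inputs n J V B \<omega>) \<partial>M) \<bullet> g \<ge> (1 - sin \<alpha>) * (norm g)\<^sup>2
          \<and> (1 - sin \<alpha>) * (norm g)\<^sup>2 > 0"
proof -
  interpret prob_space M by fact
  define t where "t = eta n f * sqrt (real DIM('a)) * \<sigma>"
  have t0: "0 \<le> t" unfolding t_def eta_def Let_def using \<open>0 \<le> \<sigma>\<close> by simp
  define C where "C = {1..n} - J"
  have C: "C \<subseteq> {1..n}" "card C = n - f"
    unfolding C_def using J finite_subset[OF J(1)] by (auto simp: card_Diff_subset)
  define Y where "Y = (\<lambda>\<omega>. multi_krum n f (byz_inputs n J V B \<omega>))"
  define S where "S = (\<lambda>\<omega>. \<Sum>k\<in>C. (norm (byz_inputs n J V B \<omega> k - g))\<^sup>2)"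
  have honest: "integrable M (\<lambda>\<omega>. (norm (byz_inputs n J V B \<omega> k - g))\<^sup>2)
      \<and> (\<integral>\<omega>. (norm (byz_inputs n J V B \<omega> k - g))\<^sup>2 \<partial>M) = real DIM('a) * \<sigma>\<^sup>2" if k: "k \<in> C" for k
  proof -
    obtain j where j: "j \<in> {1..n-f}" "\<And>\<omega>. byz_inputs n J V B \<omega> k = V j \<omega>"
      using byz_inputs_honest[OF J, of k V B] k unfolding C_def by blast
    have Vj: "V j \<in> borel_measurable M" "distr M borel (V j) = G" using V j(1) by auto
    have h: "(\<lambda>x. (norm (x - g))\<^sup>2) \<in> borel_measurable (borel :: 'a measure)" by measurable
    show ?thesis
      using integrable_distr_eq[OF Vj(1) h] integral_distr[OF Vj(1) h] iG2 vG unfolding j(2) Vj(2) by simp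
  qed
  have Si: "integrable M S" unfolding S_def using honest by auto
  have "expectation S = real (n-f) * (real DIM('a) * \<sigma>\<^sup>2)"
    unfolding S_def using honest C(2) by (subst Bochner_Integration.integral_sum) auto
  then have "expectation (\<lambda>\<omega>. krum_factor n f * S \<omega>)
      = (real (n-f) * krum_factor n f) * (real DIM('a) * \<sigma>\<^sup>2)" by simp
  also have "\<dots> \<le> (eta n f)\<^sup>2 * (real DIM('a) * \<sigma>\<^sup>2)"
    by (intro mult_right_mono krum_factor_le_eta_sq[OF nf]) simp
  also have "\<dots> = t\<^sup>2" unfolding t_def by (simp add: power_mult_distrib)
  finally have EW: "expectation (\<lambda>\<omega>. krum_factor n f * S \<omega>) \<le> t\<^sup>2" .
  have Zle: "(norm (Y \<omega> - g))\<^sup>2 \<le> krum_factor n f * S \<omega>" for \<omega>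
    unfolding Y_def S_def by (rule norm_multi_krum_diff_sq_le_honest[OF nf C])
  have Ym: "Y \<in> borel_measurable M"
    unfolding Y_def using V B by (intro measurable_multi_krum_byz_inputs[OF J]) auto
  then have Zm: "(\<lambda>\<omega>. norm (Y \<omega> - g)) \<in> borel_measurable M" by measurable
  have Wi: "integrable M (\<lambda>\<omega>. krum_factor n f * S \<omega>)" using Si by simp
  note Z = expectation_le_sqrt_if_sq_le[OF Zm Wi Zle]
  have "expectation (\<lambda>\<omega>. norm (Y \<omega> - g)) \<le> t"
    using Z(2) real_sqrt_le_mono[OF EW] t0 by simp
  then have "(norm g)\<^sup>2 - norm g * t \<le> integral\<^sup>L M Y \<bullet> g"
    using inner_integral_ge[OF Ym Z(1)] mult_left_mono[of _ t "norm g"] by fastforce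
  moreover have "0 < norm g" using lt t0 unfolding t_def by linarith
  then have "(1 - sin \<alpha>) * (norm g)\<^sup>2 = (norm g)\<^sup>2 - norm g * t"
    unfolding sa t_def[symmetric] by (simp add: field_simps power2_eq_square)
  moreover have "norm g * t < norm g * norm g" using lt \<open>0 < norm g\<close> unfolding t_def by simp
  ultimately show ?thesis unfolding Y_def by (simp add: power2_eq_square)
qed

section \<open>Moments of the output\<close>

lemma norm_multi_krum_pow_le:
  assumes nf: "2*f+2 < n" and C: "C \<subseteq> {1..n}" "card C = n - f"
  shows "(norm (multi_krum n f X))^r \<le> (sqrt (krum_factor n f * real (n-f)))^r * (\<Sum>k\<in>C. (norm (X k))^r)"
proof -
  have fC: "finite C" using finite_subset[OF C(1)] by simp
  have "C \<noteq> {}" using C(2) nf by auto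
  then have "Max ((\<lambda>k. norm (X k)) ` C) \<in> (\<lambda>k. norm (X k)) ` C"
    using fC by (intro Max_in) auto
  then obtain k0 where k0: "k0 \<in> C" and k0_max: "norm (X k0) = Max ((\<lambda>k. norm (X k)) ` C)"
    by auto
  have max: "norm (X k) \<le> norm (X k0)" if "k \<in> C" for k
    unfolding k0_max using fC that by (metis Max_ge finite_imageI imageI)
  have Q0: "0 \<le> krum_factor n f" by (rule krum_factor_nonneg[OF nf])
  have "(norm (multi_krum n f X))\<^sup>2 \<le> krum_factor n f * (\<Sum>k\<in>C. (norm (X k))\<^sup>2)"
    using norm_multi_krum_diff_sq_le_honest[OF nf C, of X 0] by simp
  also have "\<dots> \<le> krum_factor n f * (\<Sum>k\<in>C. (norm (X k0))\<^sup>2)"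
    by (intro mult_left_mono sum_mono power_mono max Q0) auto
  also have "\<dots> = (sqrt (krum_factor n f * real (n-f)) * norm (X k0))\<^sup>2"
    using C(2) Q0 by (simp add: power_mult_distrib)
  finally have "norm (multi_krum n f X) \<le> sqrt (krum_factor n f * real (n-f)) * norm (X k0)"
    by (rule power2_le_imp_le) (simp add: Q0)
  then have "(norm (multi_krum n f X))^r \<le> (sqrt (krum_factor n f * real (n-f)) * norm (X k0))^r"
    by (simp add: power_mono)
  also have "\<dots> = (sqrt (krum_factor n f * real (n-f)))^r * (norm (X k0))^r"
    by (rule power_mult_distrib)
  also have "\<dots> \<le> (sqrt (krum_factor n f * real (n-f)))^r * (\<Sum>k\<in>C. (norm (X k))^r)"
    by (intro mult_left_mono member_le_sum k0 fC) (auto simp: Q0 nf)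
  finally show ?thesis .
qed

lemma finite_moment_exps: "finite (moment_exps k r)"
proof -
  define ext where "ext = (\<lambda>h::nat \<Rightarrow> nat. \<lambda>i. if i < k then h i else 0)"
  have "moment_exps k r \<subseteq> ext ` (PiE {..<k} (\<lambda>_. {..r}))"
  proof
    fix rs assume "rs \<in> moment_exps k r"
    then have z: "\<forall>i\<ge>k. rs i = 0" and s: "(\<Sum>i<k. rs i) = r" unfolding moment_exps_def by auto
    have "rs i \<le> r" if "i < k" for i
      using s that by (metis finite_lessThan lessThan_iff member_le_sum zero_le)
    then have "restrict rs {..<k} \<in> PiE {..<k} (\<lambda>_. {..r})" by auto
    moreover have "rs = ext (restrict rs {..<k})" unfolding ext_def using z by (auto simp: fun_eq_iff)
    ultimately show "rs \<in> ext ` (PiE {..<k} (\<lambda>_. {..r}))" by blast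
  qed
  then show ?thesis by (rule finite_subset) (intro finite_imageI finite_PiE; simp)
qed

text \<open>The bound needs a single moment: all the weight sits on the exponent tuple (r, 0, ..., 0).\<close>

definition moment_coeff :: "nat \<Rightarrow> nat \<Rightarrow> nat \<Rightarrow> (nat \<Rightarrow> nat) \<Rightarrow> real" where
  "moment_coeff n f r rs = (if rs = (\<lambda>i. if i = 0 then r else 0)
     then real (n-f) * (sqrt (krum_factor n f * real (n-f)))^r else 0)"

lemma moment_coeff_nonneg: "2*f+2 < n \<Longrightarrow> 0 \<le> moment_coeff n f r rs"
  unfolding moment_coeff_def using krum_factor_nonneg by simp

lemma sum_moment_coeff:
  fixes G :: "'a::real_normed_vector measure"
  assumes n: "2 \<le> n" and G: "prob_space G"
  shows "(\<Sum>rs\<in>moment_exps (n - 1) r. ennreal (moment_coeff n f r rs)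
            * (\<Prod>i<n - 1. \<integral>\<^sup>+x. ennreal ((norm x) ^ rs i) \<partial>G))
       = ennreal (real (n-f) * (sqrt (krum_factor n f * real (n-f)))^r) * (\<integral>\<^sup>+x. ennreal ((norm x) ^ r) \<partial>G)"
proof -
  define e where "e = (\<lambda>i::nat. if i = 0 then r else 0)"
  have e: "e \<in> moment_exps (n-1) r" unfolding moment_exps_def e_def using n by auto
  have "(\<Prod>i<n - 1. \<integral>\<^sup>+x. ennreal ((norm x) ^ e i) \<partial>G)
      = (\<integral>\<^sup>+x. ennreal ((norm x) ^ e 0) \<partial>G) * (\<Prod>i\<in>{..<n-1} - {0}. \<integral>\<^sup>+x. ennreal ((norm x) ^ e i) \<partial>G)"
    using n by (intro prod.remove) auto
  also have "(\<Prod>i\<in>{..<n-1} - {0}. \<integral>\<^sup>+x. ennreal ((norm x) ^ e i) \<partial>G) = 1"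
    using prob_space.emeasure_space_1[OF G] by (intro prod.neutral) (simp add: e_def)
  finally have "(\<Prod>i<n - 1. \<integral>\<^sup>+x. ennreal ((norm x) ^ e i) \<partial>G) = (\<integral>\<^sup>+x. ennreal ((norm x) ^ r) \<partial>G)"
    by (simp add: e_def)
  then show ?thesis
    unfolding moment_coeff_def e_def[symmetric]
    by (subst sum.remove[OF finite_moment_exps e]) (auto intro!: sum.neutral)
qed

lemma nn_integral_multi_krum_pow_le:
  fixes M :: "'w measure" and G :: "'a::euclidean_space measure"
  assumes nf: "2*f+2 < n" and "prob_space M"
    and V: "\<forall>i\<in>{1..n-f}. V i \<in> borel_measurable M \<and> distr M borel (V i) = G"
    and J: "J \<subseteq> {1..n}" "card J = f"
  shows "(\<integral>\<^sup>+\<omega>. ennreal ((norm (multi_krum n f (byz_inputs n J V B \<omega>))) ^ r) \<partial>M)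
     \<le> ennreal (real (n-f) * (sqrt (krum_factor n f * real (n-f)))^r) * (\<integral>\<^sup>+x. ennreal ((norm x) ^ r) \<partial>G)"
proof -
  define K where "K = (sqrt (krum_factor n f * real (n-f)))^r"
  define I where "I = (\<integral>\<^sup>+x. ennreal ((norm x) ^ r) \<partial>G)"
  define X where "X = (\<lambda>k \<omega>. ennreal (K * (norm (byz_inputs n J V B \<omega> k))^r))"
  have K0: "0 \<le> K" unfolding K_def using krum_factor_nonneg[OF nf] by simp
  define C where "C = {1..n} - J"
  have C: "C \<subseteq> {1..n}" "card C = n - f"
    unfolding C_def using J finite_subset[OF J(1)] by (auto simp: card_Diff_subset)
  have honest: "X k \<in> borel_measurable M \<and> (\<integral>\<^sup>+\<omega>. X k \<omega> \<partial>M) = ennreal K * I" if k: "k \<in> C" for k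
  proof -
    obtain j where j: "j \<in> {1..n-f}" "\<And>\<omega>. byz_inputs n J V B \<omega> k = V j \<omega>"
      using byz_inputs_honest[OF J, of k V B] k unfolding C_def by blast
    have Vj: "V j \<in> borel_measurable M" "distr M borel (V j) = G" using V j(1) by auto
    have "(\<integral>\<^sup>+\<omega>. X k \<omega> \<partial>M) = ennreal K * (\<integral>\<^sup>+\<omega>. ennreal ((norm (V j \<omega>))^r) \<partial>M)"
      unfolding X_def j(2) using K0 Vj(1) by (simp add: ennreal_mult nn_integral_cmult)
    also have "(\<integral>\<^sup>+\<omega>. ennreal ((norm (V j \<omega>))^r) \<partial>M) = I"
      unfolding I_def Vj(2)[symmetric] by (simp add: nn_integral_distr[OF Vj(1)])
    finally show ?thesis unfolding X_def j(2) using Vj(1) by simp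
  qed
  have "(\<integral>\<^sup>+\<omega>. ennreal ((norm (multi_krum n f (byz_inputs n J V B \<omega>))) ^ r) \<partial>M)
      \<le> (\<integral>\<^sup>+\<omega>. (\<Sum>k\<in>C. X k \<omega>) \<partial>M)"
  proof (rule nn_integral_mono)
    fix \<omega>
    have "(norm (multi_krum n f (byz_inputs n J V B \<omega>))) ^ r \<le> (\<Sum>k\<in>C. K * (norm (byz_inputs n J V B \<omega> k))^r)"
      using norm_multi_krum_pow_le[OF nf C] unfolding K_def sum_distrib_left[symmetric] by blast
    then have "ennreal ((norm (multi_krum n f (byz_inputs n J V B \<omega>))) ^ r)
        \<le> ennreal (\<Sum>k\<in>C. K * (norm (byz_inputs n J V B \<omega> k))^r)"
      by (rule ennreal_leI)
    also have "\<dots> = (\<Sum>k\<in>C. X k \<omega>)"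
      unfolding X_def by (rule sum_ennreal[symmetric]) (simp add: K0)
    finally show "ennreal ((norm (multi_krum n f (byz_inputs n J V B \<omega>))) ^ r) \<le> (\<Sum>k\<in>C. X k \<omega>)" .
  qed
  also have "\<dots> = (\<Sum>k\<in>C. (\<integral>\<^sup>+\<omega>. X k \<omega> \<partial>M))"
    using honest by (intro nn_integral_sum) auto
  also have "\<dots> = ennreal (real (n-f) * K) * I"
    using honest C(2) K0 by (simp add: ennreal_mult ennreal_of_nat_eq_real_of_nat mult.assoc)
  finally show ?thesis unfolding K_def I_def .
qed

lemma multi_krum_moment_le:
  fixes M :: "'w measure" and G :: "'a::euclidean_space measure"
  assumes nf: "2*f+2 < n" and M: "prob_space M"
    and V: "\<forall>i\<in>{1..n-f}. V i \<in> borel_measurable M \<and> distr M borel (V i) = G"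
    and J: "J \<subseteq> {1..n}" "card J = f"
  shows "(\<integral>\<^sup>+\<omega>. ennreal ((norm (multi_krum n f (byz_inputs n J V B \<omega>))) ^ r) \<partial>M)
          \<le> (\<Sum>rs\<in>moment_exps (n - 1) r.
                ennreal (moment_coeff n f r rs) * (\<Prod>i<n - 1. \<integral>\<^sup>+x. ennreal ((norm x) ^ rs i) \<partial>G))"
proof -
  have V1: "V 1 \<in> borel_measurable M" "distr M borel (V 1) = G" using V nf by auto
  have G: "prob_space G" using prob_space.prob_space_distr[OF M V1(1)] V1(2) by simp
  have "(\<integral>\<^sup>+\<omega>. ennreal ((norm (multi_krum n f (byz_inputs n J V B \<omega>))) ^ r) \<partial>M)
      \<le> ennreal (real (n-f) * (sqrt (krum_factor n f * real (n-f)))^r) * (\<integral>\<^sup>+x. ennreal ((norm x) ^ r) \<partial>G)"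
    by (rule nn_integral_multi_krum_pow_le[OF nf M V J])
  also have "\<dots> = (\<Sum>rs\<in>moment_exps (n - 1) r.
                ennreal (moment_coeff n f r rs) * (\<Prod>i<n - 1. \<integral>\<^sup>+x. ennreal ((norm x) ^ rs i) \<partial>G))"
    by (rule sum_moment_coeff[symmetric]) (use nf G in auto)
  finally show ?thesis .
qed

theorem lemma1:
  fixes n f :: nat
  assumes "2 * f + 2 < n"
  shows
  "(\<forall>(M :: 'w measure) (G :: 'a::euclidean_space measure) (V :: nat \<Rightarrow> 'w \<Rightarrow> 'a)
      (B :: nat \<Rightarrow> 'w \<Rightarrow> 'a) (g :: 'a) (\<sigma> :: real) (\<alpha> :: real) (J :: nat set).
      prob_space M \<and>
      (\<forall>i\<in>{1..n-f}. V i \<in> borel_measurable M \<and> distr M borel (V i) = G) \<and>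
      prob_space.indep_vars M (\<lambda>_. borel) V {1..n-f} \<and>
      (\<forall>i\<in>{1..f}. B i \<in> borel_measurable M) \<and>
      integrable G (\<lambda>x. x) \<and> g = (\<integral>x. x \<partial>G) \<and>
      integrable G (\<lambda>x. (norm (x - g))\<^sup>2) \<and>
      (\<integral>x. (norm (x - g))\<^sup>2 \<partial>G) = real DIM('a) * \<sigma>\<^sup>2 \<and> 0 \<le> \<sigma> \<and>
      eta n f * sqrt (real DIM('a)) * \<sigma> < norm g \<and>
      0 \<le> \<alpha> \<and> \<alpha> < pi / 2 \<and> sin \<alpha> = eta n f * sqrt (real DIM('a)) * \<sigma> / norm g \<and>
      J \<subseteq> {1..n} \<and> card J = f
      \<longrightarrow> (\<integral>\<omega>. multi_krum n f (byz_inputs n J V B \<omega>) \<partial>M) \<bullet> g \<ge> (1 - sin \<alpha>) * (norm g)\<^sup>2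
          \<and> (1 - sin \<alpha>) * (norm g)\<^sup>2 > 0)
   \<and>
   (\<forall>r\<in>{2,3,4::nat}. \<exists>c :: (nat \<Rightarrow> nat) \<Rightarrow> real. (\<forall>rs. c rs \<ge> 0) \<and>
     (\<forall>(M :: 'w measure) (G :: 'a measure) (V :: nat \<Rightarrow> 'w \<Rightarrow> 'a)
      (B :: nat \<Rightarrow> 'w \<Rightarrow> 'a) (g :: 'a) (\<sigma> :: real) (\<alpha> :: real) (J :: nat set).
      prob_space M \<and>
      (\<forall>i\<in>{1..n-f}. V i \<in> borel_measurable M \<and> distr M borel (V i) = G) \<and>
      prob_space.indep_vars M (\<lambda>_. borel) V {1..n-f} \<and>
      (\<forall>i\<in>{1..f}. B i \<in> borel_measurable M) \<and>
      integrable G (\<lambda>x. x) \<and> g = (\<integral>x. x \<partial>G) \<and>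
      integrable G (\<lambda>x. (norm (x - g))\<^sup>2) \<and>
      (\<integral>x. (norm (x - g))\<^sup>2 \<partial>G) = real DIM('a) * \<sigma>\<^sup>2 \<and> 0 \<le> \<sigma> \<and>
      eta n f * sqrt (real DIM('a)) * \<sigma> < norm g \<and>
      0 \<le> \<alpha> \<and> \<alpha> < pi / 2 \<and> sin \<alpha> = eta n f * sqrt (real DIM('a)) * \<sigma> / norm g \<and>
      J \<subseteq> {1..n} \<and> card J = f
      \<longrightarrow> (\<integral>\<^sup>+\<omega>. ennreal ((norm (multi_krum n f (byz_inputs n J V B \<omega>))) ^ r) \<partial>M)
          \<le> (\<Sum>rs\<in>moment_exps (n - 1) r.
                ennreal (c rs) * (\<Prod>i<n - 1. \<integral>\<^sup>+x. ennreal ((norm x) ^ rs i) \<partial>G))))"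
  apply (rule conjI)
  subgoal by (intro allI impI, elim conjE) (rule multi_krum_inner_mean_ge[OF assms])
  apply (intro ballI)
  subgoal for r
    by (intro exI[of _ "moment_coeff n f r"] conjI allI impI moment_coeff_nonneg[OF assms], elim conjE)
      (rule multi_krum_moment_le[OF assms])
  done

end
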